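(* Let $m$ be an integer with $m\ge 1$ or $m\le -2$, let $T_j(z,w)=w^jS_j(z/w)$, and let \[F=\left[(xyw-u^2z)w^{2m}+(xyzw+4u^2w^2-x^2w^2-y^2w^2-u^2z^2)T_mT_{m-1}\right]T_{m-1}-u^2w^{2m}T_m,\] defining $S=\{F=0\}\subset\mathbb P^2(x:y:u)\times\mathbb P^1(z:w)$. The singular points $(x:y:u,z:w)$ of $S$ are: $(1:0:0,1:0)$ and $(0:1:0,1:0)$; $(1:0:0,z:1)$ and $(0:1:0,z:1)$ where $z$ is a root of $S_{m-1}(z)$; $(1:1:0,z:1)$ where $z$ is a root of $S_m(z)-S_{m-1}(z)$; $(1:-1:0,z:1)$ where $z$ is a root of $S_m(z)+S_{m-1}(z)$. The number of singularities is $4m$ if $m\ge1$, and $-(2+4m)$ if $m\le -2$.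
   Context: The Chebyshev polynomials $S_j(\omega)$ are defined for all integers $j$ by $S_0=1$, $S_1=\omega$, $S_{j+1}=\omega S_j-S_{j-1}$. $S$ is the projective closure of the natural model of the canonical component of the $\mathrm{SL}_2(\mathbb C)$ character variety of the double twist link $J(3,2m+1)$, whose affine equation is $tS_{m-1}(z)-S_m(z)=0$ with $t=xy-z+(xyz+4-x^2-y^2-z^2)S_m(z)S_{m-1}(z)$. *)

theory Defs
  imports "HOL-Analysis.Analysis"
begin

fun chebN :: "nat \<Rightarrow> complex \<Rightarrow> complex" where
  "chebN 0 w = 1"
| "chebN (Suc 0) w = w"
| "chebN (Suc (Suc n)) w = w * chebN (Suc n) w - chebN n w"

text \<open>S_j for all integers j, extending S_{j+1} = w S_j - S_{j-1} backwards:
  S_{-1} = 0 and S_{-n} = - S_{n-2} for n \<ge> 2.\<close>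
definition chebS :: "int \<Rightarrow> complex \<Rightarrow> complex" where
  "chebS j w = (if 0 \<le> j then chebN (nat j) w
                else if j = -1 then 0 else - chebN (nat (-j - 2)) w)"

text \<open>Homogenised Chebyshev polynomials: H_n(z,w) = w^n S_n(z/w) for n \<ge> 0,
  i.e. H_0 = 1, H_1 = z, H_{n+2} = z H_{n+1} - w^2 H_n.\<close>
fun chebH :: "nat \<Rightarrow> complex \<Rightarrow> complex \<Rightarrow> complex" where
  "chebH 0 z w = 1"
| "chebH (Suc 0) z w = z"
| "chebH (Suc (Suc n)) z w = z * chebH (Suc n) z w - w\<^sup>2 * chebH n z w"

definition Qform :: "complex \<Rightarrow> complex \<Rightarrow> complex \<Rightarrow> complex \<Rightarrow> complex \<Rightarrow> complex" where
  "Qform x y u z w = x*y*z*w + 4*u\<^sup>2*w\<^sup>2 - x\<^sup>2*w\<^sup>2 - y\<^sup>2*w\<^sup>2 - u\<^sup>2*z\<^sup>2"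

text \<open>For m = -n \<le> -2, T_m = -w^{2-2n} H_{n-2} and T_{m-1} = -w^{-2n} H_{n-1} are Laurent in w;
  the paper's expression is then w^{2-6n} times the polynomial below (denominators cleared
  by the minimal power of w; the result is not divisible by w), whose zero set is the
  projective closure of the affine surface.\<close>
definition Fpoly :: "int \<Rightarrow> complex \<Rightarrow> complex \<Rightarrow> complex \<Rightarrow> complex \<Rightarrow> complex \<Rightarrow> complex" where
  "Fpoly m x y u z w =
    (if 1 \<le> m then
       let Tm = chebH (nat m) z w; Tm1 = chebH (nat (m - 1)) z w in
       ((x*y*w - u\<^sup>2*z) * w ^ (2 * nat m) + Qform x y u z w * Tm * Tm1) * Tm1
         - u\<^sup>2 * w ^ (2 * nat m) * Tm
     else
       let n = nat (-m); Ha = chebH (n - 2) z w; Hb = chebH (n - 1) z w in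
       - (x*y*w - u\<^sup>2*z) * w ^ (2*n - 2) * Hb
         - Qform x y u z w * Ha * Hb\<^sup>2
         + u\<^sup>2 * w ^ (2*n) * Ha)"

definition is_singular :: "int \<Rightarrow> complex \<Rightarrow> complex \<Rightarrow> complex \<Rightarrow> complex \<Rightarrow> complex \<Rightarrow> bool" where
  "is_singular m x y u z w \<longleftrightarrow>
     Fpoly m x y u z w = 0 \<and>
     deriv (\<lambda>t. Fpoly m t y u z w) x = 0 \<and>
     deriv (\<lambda>t. Fpoly m x t u z w) y = 0 \<and>
     deriv (\<lambda>t. Fpoly m x y t z w) u = 0 \<and>
     deriv (\<lambda>t. Fpoly m x y u t w) z = 0 \<and>
     deriv (\<lambda>t. Fpoly m x y u z t) w = 0"

text \<open>A point (x:y:u, z:w) of P^2 x P^1, represented as its set of representatives.\<close>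
definition proj_pt :: "complex \<times> complex \<times> complex \<Rightarrow> complex \<times> complex
      \<Rightarrow> ((complex \<times> complex \<times> complex) \<times> (complex \<times> complex)) set" where
  "proj_pt p q = (case p of (x, y, u) \<Rightarrow> case q of (z, w) \<Rightarrow>
     {((a*x, a*y, a*u), (b*z, b*w)) | a b. a \<noteq> 0 \<and> b \<noteq> 0})"

definition singular_points :: "int \<Rightarrow> ((complex \<times> complex \<times> complex) \<times> (complex \<times> complex)) set set" where
  "singular_points m = {proj_pt (x, y, u) (z, w) | x y u z w.
      (x, y, u) \<noteq> (0, 0, 0) \<and> (z, w) \<noteq> (0, 0) \<and> is_singular m x y u z w}"

end

theory Submission
  imports Defs "HOL-Computational_Algebra.Fundamental_Theorem_Algebra"
begin

text \<open>
Write T_j for the homogenised Chebyshev polynomial chebH j. Cassini's identity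
T_{j+1}^2 - z T_{j+1} T_j + w^2 T_j^2 = w^(2j+2) and the triplication formulas for T_{3j+3} and
T_{3j+4} bring F into the shape sigma w K L_1 L_2 + tau u^2 T_N with L_1 = x T_{i+1} - y w T_i and
L_2 = y T_{i+1} - x w T_i, where (K, i, N) = (T_{m-1}, m - 1, 3m) for m >= 1 and
(K, i, N) = (T_{n-1}, n - 2, 3n - 2) for m = -n <= -2.

A singular point has u = 0: otherwise T_N = 0, which rules out K = 0 and T_{i+1} = +-w T_i, so the
x- and y-derivatives force x = y = 0, and then the z-derivative tau u^2 T_N' cannot vanish because
T_N has simple roots. On u = 0 the surface is the union of {w = 0}, {K = 0}, {L_1 = 0} and
{L_2 = 0}, and its singular points are where two of these meet: L_1 = L_2 = 0 gives x = +-y with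
T_{i+1} = +-w T_i, while w K = 0 gives x y = 0. The count follows because
S_{2j+2} = (S_{j+1} - S_j) (S_{j+1} + S_j) has simple roots only.
\<close>

section \<open>Homogenised Chebyshev polynomials\<close>

fun dchebH :: "nat \<Rightarrow> complex \<Rightarrow> complex \<Rightarrow> complex" where
  "dchebH 0 z w = 0"
| "dchebH (Suc 0) z w = 1"
| "dchebH (Suc (Suc n)) z w = chebH (Suc n) z w + z * dchebH (Suc n) z w - w\<^sup>2 * dchebH n z w"

lemma chebH_has_field_derivative_z:
  "((\<lambda>t. chebH n t w) has_field_derivative dchebH n z w) (at z)"
proof (induction n rule: induct_nat_012)
  case (ge2 n)
  then show ?case
    by (simp only: chebH.simps dchebH.simps) (auto intro!: derivative_eq_intros)
qed auto

lemma chebH_field_differentiable_w: "(\<lambda>t. chebH n z t) field_differentiable (at w)"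
proof (induction n rule: induct_nat_012)
  case (ge2 n)
  then show ?case
    by (simp only: chebH.simps) (auto intro!: derivative_intros)
qed (auto intro!: field_differentiable_const field_differentiable_ident)

lemma chebH_has_field_derivative_w:
  "((\<lambda>t. chebH n z t) has_field_derivative deriv (\<lambda>t. chebH n z t) w) (at w)"
  using chebH_field_differentiable_w by (rule field_differentiable_derivI)

lemma chebH_at_w_0: "chebH n z 0 = z ^ n"
  by (induction n rule: induct_nat_012) auto

lemma chebN_eq_chebH: "chebN n z = chebH n z 1"
  by (induction n rule: induct_nat_012) auto

lemma chebS_nonneg: "chebS (int n) z = chebH n z 1"
  by (simp add: chebS_def chebN_eq_chebH)

lemma chebS_neg: "chebS (- int (n + 2)) z = - chebH n z 1"
  by (simp add: chebS_def chebN_eq_chebH nat_add_distrib)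

lemma chebH_homogeneous: "chebH n (c * z) (c * w) = c ^ n * chebH n z w"
  by (induction n rule: induct_nat_012) (auto simp: algebra_simps power2_eq_square)

lemma chebH_dehomogenise: "w \<noteq> 0 \<Longrightarrow> chebH n z w = w ^ n * chebH n (z / w) 1"
  using chebH_homogeneous[of n w "z / w" 1] by simp

lemma chebH_eq_0_dehomogenise: "w \<noteq> 0 \<Longrightarrow> chebH n z w = 0 \<longleftrightarrow> chebH n (z / w) 1 = 0"
  by (simp add: chebH_dehomogenise[of w])

lemma chebH_consecutive_dehomogenise:
  assumes "w \<noteq> 0"
  shows "chebH (Suc i) z w = c * (w * chebH i z w) \<longleftrightarrow> chebH (Suc i) (z / w) 1 = c * chebH i (z / w) 1"
  using assms by (simp add: chebH_dehomogenise[of w] ac_simps)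

lemma chebH_cassini:
  "chebH (Suc n) z w ^ 2 - z * chebH (Suc n) z w * chebH n z w + w\<^sup>2 * chebH n z w ^ 2 = w ^ (2 * Suc n)"
proof (induction n)
  case (Suc n)
  have "chebH (Suc (Suc n)) z w ^ 2 - z * chebH (Suc (Suc n)) z w * chebH (Suc n) z w
          + w\<^sup>2 * chebH (Suc n) z w ^ 2
      = w\<^sup>2 * (chebH (Suc n) z w ^ 2 - z * chebH (Suc n) z w * chebH n z w + w\<^sup>2 * chebH n z w ^ 2)"
    by (simp add: algebra_simps power2_eq_square)
  with Suc show ?case by (simp add: power_add power2_eq_square)
qed (simp add: power2_eq_square)

lemma chebH_consecutive_not_both_0:
  assumes "(z, w) \<noteq> (0, 0)"
  shows "chebH (Suc n) z w \<noteq> 0 \<or> w * chebH n z w \<noteq> 0"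
proof (cases "w = 0")
  case False
  then show ?thesis
    using chebH_cassini[of n z w] by auto
qed (use assms in \<open>simp add: chebH_at_w_0\<close>)

lemma chebH_add:
  "chebH (a + b + 2) z w = chebH (Suc a) z w * chebH (Suc b) z w - w\<^sup>2 * chebH a z w * chebH b z w"
proof (induction b rule: induct_nat_012)
  case (ge2 b)
  have "chebH (a + Suc (Suc b) + 2) z w = z * chebH (a + Suc b + 2) z w - w\<^sup>2 * chebH (a + b + 2) z w"
    by (simp add: numeral_2_eq_2)
  then show ?case by (simp only: ge2 chebH.simps) (simp add: algebra_simps)
qed (simp_all add: numeral_2_eq_2 algebra_simps)

lemma chebH_double: "chebH (2 * k + 2) z w = chebH (Suc k) z w ^ 2 - w\<^sup>2 * chebH k z w ^ 2"
  using chebH_add[of k k z w] by (simp add: power2_eq_square mult_2)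

lemma chebH_odd: "chebH (2 * k + 1) z w = 2 * chebH (Suc k) z w * chebH k z w - z * chebH k z w ^ 2"
proof (cases k)
  case (Suc k')
  then have "2 * k + 1 = k' + Suc k' + 2"
    by simp
  then have "chebH (2 * k + 1) z w
      = chebH (Suc k') z w * chebH (Suc (Suc k')) z w - w\<^sup>2 * chebH k' z w * chebH (Suc k') z w"
    by (simp only: chebH_add)
  with Suc show ?thesis
    by (simp add: algebra_simps power2_eq_square)
qed simp

lemma chebH_triple:
  "chebH (3 * k + 3) z w
     = chebH (Suc k) z w ^ 3 - 3 * w\<^sup>2 * chebH (Suc k) z w * chebH k z w ^ 2 + z * w\<^sup>2 * chebH k z w ^ 3"
proof -
  have "3 * k + 3 = (2 * k + 1) + k + 2" and "Suc (2 * k + 1) = 2 * k + 2"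
    by simp_all
  then have "chebH (3 * k + 3) z w
      = chebH (2 * k + 2) z w * chebH (Suc k) z w - w\<^sup>2 * chebH (2 * k + 1) z w * chebH k z w"
    by (simp only: chebH_add)
  then show ?thesis
    by (simp only: chebH_double chebH_odd) (simp add: algebra_simps power2_eq_square power3_eq_cube)
qed

lemma chebH_triple_plus_1:
  "chebH (3 * k + 4) z w
     = z * chebH (Suc k) z w ^ 3 - 3 * w\<^sup>2 * chebH k z w * chebH (Suc k) z w ^ 2 + w ^ 4 * chebH k z w ^ 3"
proof -
  have "3 * k + 4 = (2 * k + 1) + Suc k + 2" and "Suc (2 * k + 1) = 2 * k + 2"
    by simp_all
  then have "chebH (3 * k + 4) z w
      = chebH (2 * k + 2) z w * chebH (Suc (Suc k)) z w - w\<^sup>2 * chebH (2 * k + 1) z w * chebH (Suc k) z w"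
    by (simp only: chebH_add)
  then show ?thesis
    by (simp only: chebH_double chebH_odd chebH.simps)
      (simp add: algebra_simps power2_eq_square power3_eq_cube power4_eq_xxxx)
qed

lemma dchebH_identity:
  "(4 * w\<^sup>2 - z\<^sup>2) * dchebH (Suc n) z w
     = - of_nat (Suc n) * z * chebH (Suc n) z w + 2 * of_nat (n + 2) * w\<^sup>2 * chebH n z w"
proof (induction n rule: induct_nat_012)
  case (ge2 n)
  have "(4 * w\<^sup>2 - z\<^sup>2) * dchebH (Suc (Suc (Suc n))) z w
      = (4 * w\<^sup>2 - z\<^sup>2) * chebH (Suc (Suc n)) z w + z * ((4 * w\<^sup>2 - z\<^sup>2) * dchebH (Suc (Suc n)) z w)
        - w\<^sup>2 * ((4 * w\<^sup>2 - z\<^sup>2) * dchebH (Suc n) z w)"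
    by (simp only: dchebH.simps) (simp add: algebra_simps)
  then show ?case by (simp only: ge2 chebH.simps) (simp add: algebra_simps power2_eq_square)
qed (simp_all add: algebra_simps power2_eq_square)

lemma chebH_simple_root:
  assumes "w \<noteq> 0" "chebH n z w = 0"
  shows "dchebH n z w \<noteq> 0"
proof (cases n)
  case (Suc n')
  show ?thesis
  proof
    assume "dchebH n z w = 0"
    with dchebH_identity[of w z n'] assms Suc have "2 * of_nat (n' + 2) * w\<^sup>2 * chebH n' z w = 0"
      by simp
    moreover have "(of_nat (n' + 2) :: complex) \<noteq> 0"
      by (simp only: of_nat_eq_0_iff)
    ultimately have "chebH n' z w = 0"
      using assms(1) by (metis mult_eq_0_iff power_eq_0_iff zero_neq_numeral)
    with assms chebH_consecutive_not_both_0[of z w n'] Suc show False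
      by simp
  qed
qed (use assms in simp)

section \<open>Counting roots\<close>

lemma rsquarefree_roots_finite_card:
  fixes p :: "complex poly"
  assumes "rsquarefree p"
  shows "finite {z. poly p z = 0} \<and> card {z. poly p z = 0} = degree p"
proof
  have "p \<noteq> 0"
    using assms unfolding rsquarefree_def by blast
  then show "finite {z. poly p z = 0}"
    by (rule poly_roots_finite)
  have "degree p = degree (smult (lead_coeff p) (\<Prod>z | poly p z = 0. [:- z, 1:]))"
    using complex_poly_decompose_rsquarefree[OF assms] by simp
  also have "\<dots> = degree (\<Prod>z | poly p z = 0. [:- z, 1:])"
    using \<open>p \<noteq> 0\<close> by simp
  also have "\<dots> = (\<Sum>z | poly p z = 0. degree [:- z, 1:])"
    by (rule degree_prod_sum_eq) simp
  finally show "card {z. poly p z = 0} = degree p"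
    by simp
qed

fun cheb_poly :: "nat \<Rightarrow> complex poly" where
  "cheb_poly 0 = 1"
| "cheb_poly (Suc 0) = [:0, 1:]"
| "cheb_poly (Suc (Suc n)) = pCons 0 (cheb_poly (Suc n)) - cheb_poly n"

lemma poly_cheb_poly: "poly (cheb_poly n) z = chebH n z 1"
  by (induction n rule: cheb_poly.induct) auto

lemma degree_cheb_poly: "degree (cheb_poly n) = n \<and> lead_coeff (cheb_poly n) = 1"
proof (induction n rule: induct_nat_012)
  case (ge2 n)
  define p where "p = pCons 0 (cheb_poly (Suc n))"
  have "cheb_poly (Suc n) \<noteq> 0" "coeff (cheb_poly (Suc n)) (Suc n) = 1"
    using ge2 by (auto simp del: cheb_poly.simps)
  then have p: "degree p = Suc (Suc n)" "lead_coeff p = 1"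
    using ge2 unfolding p_def by (simp_all add: degree_pCons_eq)
  then have "degree (- cheb_poly n) < degree p"
    using ge2 by simp
  moreover have "cheb_poly (Suc (Suc n)) = - cheb_poly n + p"
    unfolding p_def by simp
  ultimately show ?case
    using p degree_add_eq_right lead_coeff_add_le by metis
qed auto

lemma rsquarefree_cheb_poly: "rsquarefree (cheb_poly n)"
proof -
  have "poly (pderiv (cheb_poly n)) z = dchebH n z 1" for z
  proof (rule DERIV_unique)
    show "(poly (cheb_poly n) has_field_derivative poly (pderiv (cheb_poly n)) z) (at z)"
      by (rule poly_DERIV)
    show "(poly (cheb_poly n) has_field_derivative dchebH n z 1) (at z)"
      using chebH_has_field_derivative_z[of n 1 z] by (simp add: poly_cheb_poly [abs_def])
  qed
  then show ?thesis
    unfolding rsquarefree_roots using chebH_simple_root[of 1 n] by (simp add: poly_cheb_poly)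
qed

lemma cheb_poly_double:
  "cheb_poly (2 * k + 2) = (cheb_poly (Suc k) - cheb_poly k) * (cheb_poly (Suc k) + cheb_poly k)"
proof -
  have "poly (cheb_poly (2 * k + 2)) z = poly ((cheb_poly (Suc k) - cheb_poly k) * (cheb_poly (Suc k) + cheb_poly k)) z"
    for z
    by (simp only: poly_cheb_poly chebH_double) (simp add: poly_cheb_poly algebra_simps power2_eq_square)
  then show ?thesis
    by (simp add: poly_eq_poly_eq_iff [symmetric] fun_eq_iff)
qed

lemma rsquarefree_factor: "rsquarefree (p * q) \<Longrightarrow> rsquarefree (p :: complex poly)"
  unfolding rsquarefree_roots by (auto simp: pderiv_mult)

lemma chebH_roots_count:
  "finite {z. chebH n z 1 = 0} \<and> card {z. chebH n z 1 = 0} = n"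
  using rsquarefree_roots_finite_card[OF rsquarefree_cheb_poly[of n]] degree_cheb_poly[of n]
  by (simp add: poly_cheb_poly)

lemma chebH_roots_count_minus:
  "finite {z. chebH (Suc n) z 1 = chebH n z 1} \<and> card {z. chebH (Suc n) z 1 = chebH n z 1} = Suc n"
proof -
  have "rsquarefree (cheb_poly (Suc n) - cheb_poly n)" (is "rsquarefree ?q")
    using rsquarefree_cheb_poly[of "2 * n + 2", unfolded cheb_poly_double] by (rule rsquarefree_factor)
  then have "finite {z. poly ?q z = 0} \<and> card {z. poly ?q z = 0} = degree ?q"
    by (rule rsquarefree_roots_finite_card)
  moreover have "degree ?q = Suc n"
    using degree_cheb_poly[of n] degree_cheb_poly[of "Suc n"] degree_add_eq_left[of "- cheb_poly n"] by simp
  moreover have "{z. chebH (Suc n) z 1 = chebH n z 1} = {z. poly ?q z = 0}"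
    by (simp add: poly_cheb_poly)
  ultimately show ?thesis
    by (simp only:)
qed

lemma chebH_roots_count_plus:
  "finite {z. chebH (Suc n) z 1 = - chebH n z 1} \<and> card {z. chebH (Suc n) z 1 = - chebH n z 1} = Suc n"
proof -
  have "rsquarefree (cheb_poly (Suc n) + cheb_poly n)" (is "rsquarefree ?q")
    using rsquarefree_cheb_poly[of "2 * n + 2", unfolded cheb_poly_double mult.commute[of "cheb_poly (Suc n) - cheb_poly n"]]
    by (rule rsquarefree_factor)
  then have "finite {z. poly ?q z = 0} \<and> card {z. poly ?q z = 0} = degree ?q"
    by (rule rsquarefree_roots_finite_card)
  moreover have "degree ?q = Suc n"
    using degree_cheb_poly[of n] degree_cheb_poly[of "Suc n"] by (simp add: degree_add_eq_left)
  moreover have "{z. chebH (Suc n) z 1 = - chebH n z 1} = {z. poly ?q z = 0}"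
    by (simp add: poly_cheb_poly eq_neg_iff_add_eq_0)
  ultimately show ?thesis
    by (simp only:)
qed

section \<open>Critical points of the normal form\<close>

lemma lin_pair_product_eq_0_iff:
  fixes P Q x y :: "'a :: idom"
  assumes "P * Q = 0" "P \<noteq> 0 \<or> Q \<noteq> 0"
  shows "(x * P - y * Q) * (y * P - x * Q) = 0 \<longleftrightarrow> x * y = 0"
  using assms by auto

lemma lin_pair_stationary:
  fixes P Q x y :: "'a :: idom"
  assumes dx: "P * (y * P - x * Q) = Q * (x * P - y * Q)"
    and dy: "P * (x * P - y * Q) = Q * (y * P - x * Q)"
    and prod: "(x * P - y * Q) * (y * P - x * Q) = 0"
    and PQ: "P \<noteq> 0 \<or> Q \<noteq> 0" and xy: "x \<noteq> 0 \<or> y \<noteq> 0"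
  shows "P = Q \<and> x = y \<or> P = - Q \<and> x = - y"
proof -
  \<comment> \<open>Once one factor vanishes, dx and dy force the other to vanish as well.\<close>
  have L: "x * P = y * Q" "y * P = x * Q"
    using prod dx dy PQ by auto
  then have "x * (P\<^sup>2 - Q\<^sup>2) = 0" "y * (P\<^sup>2 - Q\<^sup>2) = 0"
    by (simp_all add: algebra_simps power2_eq_square)
  with xy have "P\<^sup>2 = Q\<^sup>2"
    by auto
  then consider "P = Q" | "P = - Q"
    by (auto simp: power2_eq_iff)
  then show ?thesis
  proof cases
    case 1
    with L(1) PQ show ?thesis
      by auto
  next
    case 2
    with L(1) have "Q * (x + y) = 0"
      by algebra
    with 2 PQ show ?thesis
      by (auto simp: add_eq_0_iff2)
  qed
qed

definition lin_form :: "nat \<Rightarrow> complex \<Rightarrow> complex \<Rightarrow> complex \<Rightarrow> complex \<Rightarrow> complex" where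
  "lin_form i x y z w = x * chebH (Suc i) z w - y * (w * chebH i z w)"

definition Fnormal :: "complex \<Rightarrow> complex \<Rightarrow> nat \<Rightarrow> nat \<Rightarrow> nat
    \<Rightarrow> complex \<Rightarrow> complex \<Rightarrow> complex \<Rightarrow> complex \<Rightarrow> complex \<Rightarrow> complex" where
  "Fnormal \<sigma> \<tau> k i N x y u z w =
     \<sigma> * w * chebH k z w * lin_form i x y z w * lin_form i y x z w + \<tau> * u\<^sup>2 * chebH N z w"

definition critical_point :: "(complex \<Rightarrow> complex \<Rightarrow> complex \<Rightarrow> complex \<Rightarrow> complex \<Rightarrow> complex)
    \<Rightarrow> complex \<Rightarrow> complex \<Rightarrow> complex \<Rightarrow> complex \<Rightarrow> complex \<Rightarrow> bool" where
  "critical_point F x y u z w \<longleftrightarrow>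
     F x y u z w = 0 \<and>
     deriv (\<lambda>t. F t y u z w) x = 0 \<and>
     deriv (\<lambda>t. F x t u z w) y = 0 \<and>
     deriv (\<lambda>t. F x y t z w) u = 0 \<and>
     deriv (\<lambda>t. F x y u t w) z = 0 \<and>
     deriv (\<lambda>t. F x y u z t) w = 0"

lemmas chebH_has_field_derivative_z_chain = DERIV_chain2[OF chebH_has_field_derivative_z]

lemmas chebH_has_field_derivative_w_chain = DERIV_chain2[OF chebH_has_field_derivative_w]

lemma deriv_Fnormal_x:
  "deriv (\<lambda>t. Fnormal \<sigma> \<tau> k i N t y u z w) x
     = \<sigma> * w * chebH k z w * (chebH (Suc i) z w * lin_form i y x z w - w * chebH i z w * lin_form i x y z w)"
  unfolding Fnormal_def lin_form_def
  by (rule DERIV_imp_deriv) (auto intro!: derivative_eq_intros simp: algebra_simps)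

lemma deriv_Fnormal_y:
  "deriv (\<lambda>t. Fnormal \<sigma> \<tau> k i N x t u z w) y
     = \<sigma> * w * chebH k z w * (chebH (Suc i) z w * lin_form i x y z w - w * chebH i z w * lin_form i y x z w)"
  unfolding Fnormal_def lin_form_def
  by (rule DERIV_imp_deriv) (auto intro!: derivative_eq_intros simp: algebra_simps)

lemma deriv_Fnormal_u: "deriv (\<lambda>t. Fnormal \<sigma> \<tau> k i N x y t z w) u = 2 * \<tau> * u * chebH N z w"
  unfolding Fnormal_def
  by (rule DERIV_imp_deriv) (auto intro!: derivative_eq_intros)

lemma deriv_Fnormal_z:
  "deriv (\<lambda>t. Fnormal \<sigma> \<tau> k i N x y u t w) z
     = \<sigma> * w * (dchebH k z w * lin_form i x y z w * lin_form i y x z w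
         + chebH k z w * (x * dchebH (Suc i) z w - y * w * dchebH i z w) * lin_form i y x z w
         + chebH k z w * lin_form i x y z w * (y * dchebH (Suc i) z w - x * w * dchebH i z w))
       + \<tau> * u\<^sup>2 * dchebH N z w"
  unfolding Fnormal_def lin_form_def
  by (rule DERIV_imp_deriv)
    (auto intro!: derivative_eq_intros chebH_has_field_derivative_z_chain simp: algebra_simps)

lemma deriv_Fnormal_w:
  fixes x y u z w :: complex
  defines "D n \<equiv> deriv (\<lambda>t. chebH n z t) w"
  shows "deriv (\<lambda>t. Fnormal \<sigma> \<tau> k i N x y u z t) w
     = \<sigma> * (chebH k z w * lin_form i x y z w * lin_form i y x z w
         + w * (D k * lin_form i x y z w * lin_form i y x z w
           + chebH k z w * (x * D (Suc i) - y * chebH i z w - y * w * D i) * lin_form i y x z w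
           + chebH k z w * lin_form i x y z w * (y * D (Suc i) - x * chebH i z w - x * w * D i)))
       + \<tau> * u\<^sup>2 * D N"
  unfolding Fnormal_def lin_form_def D_def
  by (rule DERIV_imp_deriv)
    (auto intro!: derivative_eq_intros chebH_has_field_derivative_w_chain simp: algebra_simps)

lemma critical_point_FnormalI:
  assumes "u = 0" "lin_form i x y z w * lin_form i y x z w = 0"
    and "w = 0 \<or> chebH k z w = 0 \<or> lin_form i x y z w = 0 \<and> lin_form i y x z w = 0"
  shows "critical_point (Fnormal \<sigma> \<tau> k i N) x y u z w"
  using assms unfolding critical_point_def deriv_Fnormal_x deriv_Fnormal_y deriv_Fnormal_u
    deriv_Fnormal_z deriv_Fnormal_w
  by (auto simp: Fnormal_def)

locale Fnormal_nondegenerate =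
  fixes \<sigma> \<tau> :: complex and k i N :: nat
  assumes sigma_nonzero: "\<sigma> \<noteq> 0" and tau_nonzero: "\<tau> \<noteq> 0"
    and k_cases: "k = i \<or> k = Suc i"
    and nondegenerate: "\<And>z w. w \<noteq> 0 \<Longrightarrow> chebH N z w = 0 \<Longrightarrow>
      chebH k z w \<noteq> 0 \<and> chebH (Suc i) z w \<noteq> w * chebH i z w \<and> chebH (Suc i) z w \<noteq> - (w * chebH i z w)"
begin

lemma lin_forms_product_eq_0_iff:
  assumes "(z, w) \<noteq> (0, 0)" "w = 0 \<or> chebH k z w = 0"
  shows "lin_form i x y z w * lin_form i y x z w = 0 \<longleftrightarrow> x * y = 0"
proof -
  have "chebH (Suc i) z w * (w * chebH i z w) = 0"
    using assms(2) k_cases by auto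
  moreover have "chebH (Suc i) z w \<noteq> 0 \<or> w * chebH i z w \<noteq> 0"
    using assms(1) by (rule chebH_consecutive_not_both_0)
  ultimately show ?thesis
    unfolding lin_form_def by (rule lin_pair_product_eq_0_iff)
qed

lemma critical_point_u_eq_0:
  assumes zw: "(z, w) \<noteq> (0, 0)" and crit: "critical_point (Fnormal \<sigma> \<tau> k i N) x y u z w"
  shows "u = 0"
proof (rule ccontr)
  assume "u \<noteq> 0"
  define P Q L1 L2 where "P = chebH (Suc i) z w" and "Q = w * chebH i z w"
    and "L1 = lin_form i x y z w" and "L2 = lin_form i y x z w"
  have L: "L1 = x * P - y * Q" "L2 = y * P - x * Q"
    unfolding L1_def L2_def P_def Q_def lin_form_def by simp_all
  from crit \<open>u \<noteq> 0\<close> tau_nonzero have H: "chebH N z w = 0"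
    by (simp add: critical_point_def deriv_Fnormal_u)
  have "w \<noteq> 0"
    using H zw by (auto simp: chebH_at_w_0)
  with H nondegenerate have K: "chebH k z w \<noteq> 0" and PQ: "P \<noteq> Q" "P \<noteq> - Q"
    unfolding P_def Q_def by auto
  have nz: "\<sigma> * w * chebH k z w \<noteq> 0"
    using sigma_nonzero \<open>w \<noteq> 0\<close> K by simp
  from crit H have "\<sigma> * w * chebH k z w * (L1 * L2) = 0"
    "\<sigma> * w * chebH k z w * (P * L2 - Q * L1) = 0" "\<sigma> * w * chebH k z w * (P * L1 - Q * L2) = 0"
    unfolding critical_point_def deriv_Fnormal_x deriv_Fnormal_y
    by (simp_all add: Fnormal_def P_def Q_def L1_def L2_def mult.assoc)
  with nz have "L1 * L2 = 0" "P * L2 = Q * L1" "P * L1 = Q * L2"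
    by simp_all
  moreover have "P \<noteq> 0 \<or> Q \<noteq> 0"
    using chebH_consecutive_not_both_0[OF zw] unfolding P_def Q_def .
  ultimately have "x = 0 \<and> y = 0"
    using lin_pair_stationary[of P y x Q] PQ unfolding L by blast
  with crit have "\<tau> * u\<^sup>2 * dchebH N z w = 0"
    by (simp add: critical_point_def deriv_Fnormal_z lin_form_def)
  with tau_nonzero \<open>u \<noteq> 0\<close> chebH_simple_root[OF \<open>w \<noteq> 0\<close> H] show False
    by simp
qed

lemma critical_point_cases:
  assumes xyu: "(x, y, u) \<noteq> (0, 0, 0)" and zw: "(z, w) \<noteq> (0, 0)"
    and crit: "critical_point (Fnormal \<sigma> \<tau> k i N) x y u z w"
  shows "(w = 0 \<or> chebH k z w = 0) \<and> x * y = 0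
     \<or> w \<noteq> 0 \<and> chebH (Suc i) z w = w * chebH i z w \<and> x = y
     \<or> w \<noteq> 0 \<and> chebH (Suc i) z w = - (w * chebH i z w) \<and> x = - y"
proof -
  have "u = 0"
    using zw crit by (rule critical_point_u_eq_0)
  define P Q L1 L2 where "P = chebH (Suc i) z w" and "Q = w * chebH i z w"
    and "L1 = lin_form i x y z w" and "L2 = lin_form i y x z w"
  consider "w = 0" | "w \<noteq> 0" "chebH k z w = 0" | "w \<noteq> 0" "chebH k z w \<noteq> 0"
    by blast
  then show ?thesis
  proof cases
    case 1
    with crit \<open>u = 0\<close> have "\<sigma> * chebH k z w * (L1 * L2) = 0"
      by (simp add: critical_point_def deriv_Fnormal_w L1_def L2_def mult.assoc)
    moreover have "chebH k z w \<noteq> 0"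
      using 1 zw by (simp add: chebH_at_w_0)
    ultimately show ?thesis
      using 1 lin_forms_product_eq_0_iff[OF zw] sigma_nonzero unfolding L1_def L2_def by simp
  next
    case 2
    with crit \<open>u = 0\<close> have "\<sigma> * w * dchebH k z w * (L1 * L2) = 0"
      by (simp add: critical_point_def deriv_Fnormal_z L1_def L2_def mult.assoc)
    then show ?thesis
      using 2 lin_forms_product_eq_0_iff[OF zw] sigma_nonzero chebH_simple_root[of w k z]
      unfolding L1_def L2_def by simp
  next
    case 3
    then have nz: "\<sigma> * w * chebH k z w \<noteq> 0"
      using sigma_nonzero by simp
    from crit \<open>u = 0\<close> have "\<sigma> * w * chebH k z w * (L1 * L2) = 0"
      "\<sigma> * w * chebH k z w * (P * L2 - Q * L1) = 0" "\<sigma> * w * chebH k z w * (P * L1 - Q * L2) = 0"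
      unfolding critical_point_def deriv_Fnormal_x deriv_Fnormal_y
      by (simp_all add: Fnormal_def P_def Q_def L1_def L2_def mult.assoc)
    with nz have "L1 * L2 = 0" "P * L2 = Q * L1" "P * L1 = Q * L2"
      by simp_all
    moreover have "L1 = x * P - y * Q" "L2 = y * P - x * Q"
      unfolding L1_def L2_def P_def Q_def lin_form_def by simp_all
    moreover have "P \<noteq> 0 \<or> Q \<noteq> 0"
      using chebH_consecutive_not_both_0[OF zw] unfolding P_def Q_def .
    moreover have "x \<noteq> 0 \<or> y \<noteq> 0"
      using xyu \<open>u = 0\<close> by auto
    ultimately have "P = Q \<and> x = y \<or> P = - Q \<and> x = - y"
      using lin_pair_stationary[of P y x Q] by simp
    then show ?thesis
      using 3 unfolding P_def Q_def by blast
  qed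
qed

lemma critical_point_iff:
  assumes xyu: "(x, y, u) \<noteq> (0, 0, 0)" and zw: "(z, w) \<noteq> (0, 0)"
  shows "critical_point (Fnormal \<sigma> \<tau> k i N) x y u z w \<longleftrightarrow> u = 0 \<and>
    ((w = 0 \<or> chebH k z w = 0) \<and> x * y = 0
     \<or> w \<noteq> 0 \<and> chebH (Suc i) z w = w * chebH i z w \<and> x = y
     \<or> w \<noteq> 0 \<and> chebH (Suc i) z w = - (w * chebH i z w) \<and> x = - y)"
    (is "_ \<longleftrightarrow> u = 0 \<and> ?cases")
proof
  assume "critical_point (Fnormal \<sigma> \<tau> k i N) x y u z w"
  then show "u = 0 \<and> ?cases"
    using critical_point_u_eq_0 critical_point_cases xyu zw by blast
next
  assume h: "u = 0 \<and> ?cases"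
  then consider "w = 0 \<or> chebH k z w = 0" "x * y = 0"
    | "lin_form i x y z w = 0" "lin_form i y x z w = 0"
    by (auto simp: lin_form_def)
  then show "critical_point (Fnormal \<sigma> \<tau> k i N) x y u z w"
  proof cases
    case 1
    then have "lin_form i x y z w * lin_form i y x z w = 0"
      using lin_forms_product_eq_0_iff[OF zw] by blast
    with 1 h show ?thesis
      by (intro critical_point_FnormalI) auto
  next
    case 2
    with h show ?thesis
      by (intro critical_point_FnormalI) auto
  qed
qed

end

section \<open>The defining polynomial in normal form\<close>

lemma is_singular_iff_critical_point: "is_singular m x y u z w \<longleftrightarrow> critical_point (Fpoly m) x y u z w"
  unfolding is_singular_def critical_point_def ..

lemma Fpoly_pos_eq_Fnormal: "Fpoly (int (Suc k)) = Fnormal 1 (-1) k k (3 * k + 3)"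
proof (intro ext)
  fix x y u z w :: complex
  define P R where "P = chebH (Suc k) z w" and "R = chebH k z w"
  have W: "w ^ (2 * Suc k) = P\<^sup>2 - z * P * R + w\<^sup>2 * R\<^sup>2"
    using chebH_cassini[of k z w] unfolding P_def R_def by simp
  have [simp]: "nat (1 + int k) = Suc k"
    by arith
  have H: "chebH (3 * k + 3) z w = P ^ 3 - 3 * w\<^sup>2 * P * R\<^sup>2 + z * w\<^sup>2 * R ^ 3"
    using chebH_triple[of k z w] unfolding P_def R_def .
  have "Fpoly (int (Suc k)) x y u z w
      = ((x * y * w - u\<^sup>2 * z) * w ^ (2 * Suc k) + Qform x y u z w * P * R) * R - u\<^sup>2 * w ^ (2 * Suc k) * P"
    by (simp add: Fpoly_def Let_def P_def R_def)
  also have "\<dots> = Fnormal 1 (-1) k k (3 * k + 3) x y u z w"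
    unfolding W Fnormal_def lin_form_def H Qform_def P_def [symmetric] R_def [symmetric] by algebra
  finally show "Fpoly (int (Suc k)) x y u z w = Fnormal 1 (-1) k k (3 * k + 3) x y u z w" .
qed

lemma Fpoly_neg_eq_Fnormal: "Fpoly (- int (k + 2)) = Fnormal (-1) 1 (Suc k) k (3 * k + 4)"
proof (intro ext)
  fix x y u z w :: complex
  define P R where "P = chebH (Suc k) z w" and "R = chebH k z w"
  have W: "w ^ (2 * Suc k) = P\<^sup>2 - z * P * R + w\<^sup>2 * R\<^sup>2"
    using chebH_cassini[of k z w] unfolding P_def R_def by simp
  have H: "chebH (3 * k + 4) z w = z * P ^ 3 - 3 * w\<^sup>2 * R * P\<^sup>2 + w ^ 4 * R ^ 3"
    using chebH_triple_plus_1[of k z w] unfolding P_def R_def .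
  have e: "2 * (k + 2) - 2 = 2 * Suc k" "2 * (k + 2) = 2 + 2 * Suc k"
    by simp_all
  have "Fpoly (- int (k + 2)) x y u z w
      = - (x * y * w - u\<^sup>2 * z) * w ^ (2 * Suc k) * P - Qform x y u z w * R * P\<^sup>2
        + u\<^sup>2 * (w\<^sup>2 * w ^ (2 * Suc k)) * R"
    by (simp add: Fpoly_def Let_def P_def R_def e nat_add_distrib power_add power2_eq_square)
  also have "\<dots> = Fnormal (-1) 1 (Suc k) k (3 * k + 4) x y u z w"
    unfolding W Fnormal_def lin_form_def H Qform_def P_def [symmetric] R_def [symmetric] by algebra
  finally show "Fpoly (- int (k + 2)) x y u z w = Fnormal (-1) 1 (Suc k) k (3 * k + 4) x y u z w" .
qed

lemma triple_cassini_relations: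
  fixes P R W H w z :: complex
  assumes "W = P\<^sup>2 - z * P * R + w\<^sup>2 * R\<^sup>2" "H = P ^ 3 - 3 * w\<^sup>2 * P * R\<^sup>2 + z * w\<^sup>2 * R ^ 3"
  shows "R = 0 \<Longrightarrow> H = P * W" "P = w * R \<Longrightarrow> H = - (w * R * W)" "P = - (w * R) \<Longrightarrow> H = w * R * W"
  using assms by algebra+

lemma triple_plus_1_cassini_relations:
  fixes P R W H w z :: complex
  assumes "W = P\<^sup>2 - z * P * R + w\<^sup>2 * R\<^sup>2" "H = z * P ^ 3 - 3 * w\<^sup>2 * R * P\<^sup>2 + w ^ 4 * R ^ 3"
  shows "P = 0 \<Longrightarrow> H = w\<^sup>2 * R * W" "P = w * R \<Longrightarrow> H = - (w\<^sup>2 * R * W)"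
    "P = - (w * R) \<Longrightarrow> H = - (w\<^sup>2 * R * W)"
  using assms by algebra+

lemma Fnormal_nondegenerate_pos: "Fnormal_nondegenerate 1 (-1) k k (3 * k + 3)"
proof
  fix z w :: complex
  assume "w \<noteq> 0" and H: "chebH (3 * k + 3) z w = 0"
  define P R W where "P = chebH (Suc k) z w" and "R = chebH k z w" and "W = w ^ (2 * Suc k)"
  have rel: "W = P\<^sup>2 - z * P * R + w\<^sup>2 * R\<^sup>2" "chebH (3 * k + 3) z w = P ^ 3 - 3 * w\<^sup>2 * P * R\<^sup>2 + z * w\<^sup>2 * R ^ 3"
    using chebH_cassini[of k z w] chebH_triple[of k z w] unfolding P_def R_def W_def by simp_all
  have "W \<noteq> 0" "P \<noteq> 0 \<or> R \<noteq> 0"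
    using \<open>w \<noteq> 0\<close> chebH_consecutive_not_both_0[of z w k] unfolding W_def P_def R_def by simp_all
  then have "R \<noteq> 0"
    using triple_cassini_relations(1)[OF rel] H by auto
  with \<open>W \<noteq> 0\<close> \<open>w \<noteq> 0\<close> have "P \<noteq> w * R" "P \<noteq> - (w * R)"
    using triple_cassini_relations(2,3)[OF rel] H by auto
  with \<open>R \<noteq> 0\<close> show "chebH k z w \<noteq> 0 \<and> chebH (Suc k) z w \<noteq> w * chebH k z w
      \<and> chebH (Suc k) z w \<noteq> - (w * chebH k z w)"
    unfolding P_def R_def by blast
qed simp_all

lemma Fnormal_nondegenerate_neg: "Fnormal_nondegenerate (-1) 1 (Suc k) k (3 * k + 4)"
proof
  fix z w :: complex
  assume "w \<noteq> 0" and H: "chebH (3 * k + 4) z w = 0"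
  define P R W where "P = chebH (Suc k) z w" and "R = chebH k z w" and "W = w ^ (2 * Suc k)"
  have rel: "W = P\<^sup>2 - z * P * R + w\<^sup>2 * R\<^sup>2" "chebH (3 * k + 4) z w = z * P ^ 3 - 3 * w\<^sup>2 * R * P\<^sup>2 + w ^ 4 * R ^ 3"
    using chebH_cassini[of k z w] chebH_triple_plus_1[of k z w] unfolding P_def R_def W_def by simp_all
  have "W \<noteq> 0" "P \<noteq> 0 \<or> R \<noteq> 0"
    using \<open>w \<noteq> 0\<close> chebH_consecutive_not_both_0[of z w k] unfolding W_def P_def R_def by simp_all
  then have "P \<noteq> 0"
    using triple_plus_1_cassini_relations(1)[OF rel] H \<open>w \<noteq> 0\<close> by auto
  then have "R \<noteq> 0" if "P = w * R \<or> P = - (w * R)"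
    using that by auto
  with \<open>W \<noteq> 0\<close> \<open>w \<noteq> 0\<close> have "P \<noteq> w * R" "P \<noteq> - (w * R)"
    using triple_plus_1_cassini_relations(2,3)[OF rel] H by auto
  with \<open>P \<noteq> 0\<close> show "chebH (Suc k) z w \<noteq> 0 \<and> chebH (Suc k) z w \<noteq> w * chebH k z w
      \<and> chebH (Suc k) z w \<noteq> - (w * chebH k z w)"
    unfolding P_def R_def by blast
qed simp_all

section \<open>The singular locus\<close>

lemma proj_pt_scale:
  assumes "a \<noteq> 0" "b \<noteq> 0"
  shows "proj_pt (a * x, a * y, a * u) (b * z, b * w) = proj_pt (x, y, u) (z, w)"
proof -
  have "(\<exists>c d. X = ((c * (a * x), c * (a * y), c * (a * u)), (d * (b * z), d * (b * w))) \<and> c \<noteq> 0 \<and> d \<noteq> 0)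
      \<longleftrightarrow> (\<exists>c d. X = ((c * x, c * y, c * u), (d * z, d * w)) \<and> c \<noteq> 0 \<and> d \<noteq> 0)" (is "?L X = ?R X") for X
  proof
    assume "\<exists>c d. X = ((c * (a * x), c * (a * y), c * (a * u)), (d * (b * z), d * (b * w))) \<and> c \<noteq> 0 \<and> d \<noteq> 0"
    then obtain c d where "c \<noteq> 0" "d \<noteq> 0" "X = ((c * (a * x), c * (a * y), c * (a * u)), (d * (b * z), d * (b * w)))"
      by blast
    with assms show "\<exists>c d. X = ((c * x, c * y, c * u), (d * z, d * w)) \<and> c \<noteq> 0 \<and> d \<noteq> 0"
      by (intro exI[of _ "c * a"] exI[of _ "d * b"]) (simp add: mult.assoc)
  next
    assume "\<exists>c d. X = ((c * x, c * y, c * u), (d * z, d * w)) \<and> c \<noteq> 0 \<and> d \<noteq> 0"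
    then obtain c d where "c \<noteq> 0" "d \<noteq> 0" "X = ((c * x, c * y, c * u), (d * z, d * w))"
      by blast
    with assms show "\<exists>c d. X = ((c * (a * x), c * (a * y), c * (a * u)), (d * (b * z), d * (b * w))) \<and> c \<noteq> 0 \<and> d \<noteq> 0"
      by (intro exI[of _ "c / a"] exI[of _ "d / b"]) simp
  qed
  then have "Collect ?L = Collect ?R"
    by (rule Collect_cong)
  then show ?thesis
    unfolding proj_pt_def prod.case .
qed

lemma proj_pt_eq_invariants:
  assumes "proj_pt (x, y, u) (z, w) = proj_pt (x', y', u') (z', w')"
  shows "(x = 0 \<longleftrightarrow> x' = 0) \<and> (y = 0 \<longleftrightarrow> y' = 0) \<and> (w = 0 \<longleftrightarrow> w' = 0) \<and> x * y' = x' * y \<and> z * w' = z' * w"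
proof -
  have "((x, y, u), (z, w)) \<in> proj_pt (x, y, u) (z, w)"
    unfolding proj_pt_def prod.case mem_Collect_eq by (intro exI[of _ 1]) simp
  then have "\<exists>a b. ((x, y, u), (z, w)) = ((a * x', a * y', a * u'), (b * z', b * w')) \<and> a \<noteq> 0 \<and> b \<noteq> 0"
    unfolding assms unfolding proj_pt_def prod.case mem_Collect_eq .
  then obtain a b where "a \<noteq> 0" "b \<noteq> 0"
    and "((x, y, u), (z, w)) = ((a * x', a * y', a * u'), (b * z', b * w'))"
    by blast
  then show ?thesis
    by auto
qed

lemma inj_on_proj_pt_affine: "inj_on (\<lambda>t. proj_pt (a, b, c) (t, 1)) S"
proof (rule inj_onI)
  fix s t
  assume "proj_pt (a, b, c) (s, 1) = proj_pt (a, b, c) (t, 1)"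
  from proj_pt_eq_invariants[OF this] show "s = t"
    by simp
qed

lemma proj_pt_infinity_notin_affine: "proj_pt (x, y, u) (z, 0) \<notin> (\<lambda>t. proj_pt (a, b, c) (t, 1)) ` S"
proof
  assume "proj_pt (x, y, u) (z, 0) \<in> (\<lambda>t. proj_pt (a, b, c) (t, 1)) ` S"
  then obtain t where "proj_pt (x, y, u) (z, 0) = proj_pt (a, b, c) (t, 1)"
    by blast
  from proj_pt_eq_invariants[OF this] show False
    by simp
qed

lemma proj_pt_affine_disjoint:
  assumes "\<not> ((a = 0 \<longleftrightarrow> a' = 0) \<and> (b = 0 \<longleftrightarrow> b' = 0) \<and> a * b' = a' * b)"
  shows "(\<lambda>t. proj_pt (a, b, c) (t, 1)) ` S \<inter> (\<lambda>t. proj_pt (a', b', c') (t, 1)) ` S' = {}"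
proof -
  have "proj_pt (a, b, c) (s, 1) \<noteq> proj_pt (a', b', c') (t, 1)" for s t
    using assms proj_pt_eq_invariants[of a b c s 1 a' b' c' t 1] by blast
  then show ?thesis
    by auto
qed

lemma proj_pt_in_singular_points:
  "(x, y, u) \<noteq> (0, 0, 0) \<Longrightarrow> (z, w) \<noteq> (0, 0) \<Longrightarrow> is_singular m x y u z w
    \<Longrightarrow> proj_pt (x, y, u) (z, w) \<in> singular_points m"
  unfolding singular_points_def by blast

definition explicit_singular_points :: "int \<Rightarrow> ((complex \<times> complex \<times> complex) \<times> complex \<times> complex) set set" where
  "explicit_singular_points m =
     {proj_pt (1, 0, 0) (1, 0), proj_pt (0, 1, 0) (1, 0)}
     \<union> {proj_pt (1, 0, 0) (z, 1) | z. chebS (m - 1) z = 0}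
     \<union> {proj_pt (0, 1, 0) (z, 1) | z. chebS (m - 1) z = 0}
     \<union> {proj_pt (1, 1, 0) (z, 1) | z. chebS m z - chebS (m - 1) z = 0}
     \<union> {proj_pt (1, -1, 0) (z, 1) | z. chebS m z + chebS (m - 1) z = 0}"

lemma card_explicit_singular_points:
  fixes m :: int
  defines "A \<equiv> {z. chebS (m - 1) z = 0}" and "B \<equiv> {z. chebS m z - chebS (m - 1) z = 0}"
    and "C \<equiv> {z. chebS m z + chebS (m - 1) z = 0}"
  assumes "finite A" "finite B" "finite C"
  shows "card (explicit_singular_points m) = 2 + 2 * card A + card B + card C"
proof -
  define T0 where "T0 = {proj_pt (1, 0, 0) (1, 0), proj_pt (0, 1, 0) (1 :: complex, 0 :: complex)}"
  define T1 T2 T3 T4 where "T1 = (\<lambda>t. proj_pt (1, 0, 0) (t, 1)) ` A" and "T2 = (\<lambda>t. proj_pt (0, 1, 0) (t, 1)) ` A"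
    and "T3 = (\<lambda>t. proj_pt (1, 1, 0) (t, 1)) ` B" and "T4 = (\<lambda>t. proj_pt (1, -1, 0) (t, 1)) ` C"
  have "proj_pt (1, 0, 0) (1, 0) \<noteq> proj_pt (0, 1, 0) (1 :: complex, 0 :: complex)"
    using proj_pt_eq_invariants[of 1 0 0 1 0 0 1 0 1 0] by auto
  then have card: "card T0 = 2" "card T1 = card A" "card T2 = card A" "card T3 = card B" "card T4 = card C"
    unfolding T0_def T1_def T2_def T3_def T4_def by (simp_all add: card_image inj_on_proj_pt_affine)
  have finite: "finite T0" "finite T1" "finite T2" "finite T3" "finite T4"
    unfolding T0_def T1_def T2_def T3_def T4_def using assms(4-6) by simp_all
  have disjoint: "T0 \<inter> T1 = {}" "T0 \<inter> T2 = {}" "T0 \<inter> T3 = {}" "T0 \<inter> T4 = {}"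
      "T1 \<inter> T2 = {}" "T1 \<inter> T3 = {}" "T1 \<inter> T4 = {}" "T2 \<inter> T3 = {}" "T2 \<inter> T4 = {}" "T3 \<inter> T4 = {}"
    unfolding T0_def T1_def T2_def T3_def T4_def
    by (simp_all add: proj_pt_infinity_notin_affine proj_pt_affine_disjoint)
  have "explicit_singular_points m = T0 \<union> T1 \<union> T2 \<union> T3 \<union> T4"
    unfolding explicit_singular_points_def T0_def T1_def T2_def T3_def T4_def A_def B_def C_def
    by (simp only: setcompr_eq_image)
  also have "card \<dots> = card T0 + card T1 + card T2 + card T3 + card T4"
    using finite disjoint by (simp add: card_Un_disjoint Int_Un_distrib2)
  finally show ?thesis
    unfolding card by simp
qed

locale Fpoly_normal_form = Fnormal_nondegenerate +
  fixes m :: int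
  assumes Fpoly_eq: "Fpoly m = Fnormal \<sigma> \<tau> k i N"
    and roots_K: "\<And>z. chebS (m - 1) z = 0 \<longleftrightarrow> chebH k z 1 = 0"
    and roots_minus: "\<And>z. chebS m z - chebS (m - 1) z = 0 \<longleftrightarrow> chebH (Suc i) z 1 = chebH i z 1"
    and roots_plus: "\<And>z. chebS m z + chebS (m - 1) z = 0 \<longleftrightarrow> chebH (Suc i) z 1 = - chebH i z 1"
begin

lemma is_singular_iff:
  "(x, y, u) \<noteq> (0, 0, 0) \<Longrightarrow> (z, w) \<noteq> (0, 0) \<Longrightarrow> is_singular m x y u z w \<longleftrightarrow> u = 0 \<and>
    ((w = 0 \<or> chebH k z w = 0) \<and> x * y = 0
     \<or> w \<noteq> 0 \<and> chebH (Suc i) z w = w * chebH i z w \<and> x = y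
     \<or> w \<noteq> 0 \<and> chebH (Suc i) z w = - (w * chebH i z w) \<and> x = - y)"
  unfolding is_singular_iff_critical_point Fpoly_eq by (rule critical_point_iff)

lemma singular_point_at_infinity:
  assumes xyu: "(x, y, u) \<noteq> (0, 0, 0)" and zw: "(z, w) \<noteq> (0, 0)" and sing: "is_singular m x y u z w"
    and "w = 0"
  shows "proj_pt (x, y, u) (z, w) \<in> explicit_singular_points m"
proof -
  have "u = 0" "x * y = 0" "z \<noteq> 0"
    using sing is_singular_iff[OF xyu zw] zw \<open>w = 0\<close> by auto
  with xyu consider "x = 0" "y \<noteq> 0" | "y = 0" "x \<noteq> 0"
    by auto
  then have "proj_pt (x, y, u) (z, w) \<in> {proj_pt (1, 0, 0) (1, 0), proj_pt (0, 1, 0) (1, 0)}"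
  proof cases
    case 1
    then show ?thesis
      using proj_pt_scale[of y z 0 1 0 1 0] \<open>z \<noteq> 0\<close> \<open>w = 0\<close> \<open>u = 0\<close> by simp
  next
    case 2
    then show ?thesis
      using proj_pt_scale[of x z 1 0 0 1 0] \<open>z \<noteq> 0\<close> \<open>w = 0\<close> \<open>u = 0\<close> by simp
  qed
  then show ?thesis
    unfolding explicit_singular_points_def by blast
qed

lemma singular_point_affine:
  assumes xyu: "(x, y, u) \<noteq> (0, 0, 0)" and zw: "(z, w) \<noteq> (0, 0)" and sing: "is_singular m x y u z w"
    and "w \<noteq> 0"
  shows "proj_pt (x, y, u) (z, w) \<in> explicit_singular_points m"
proof -
  define t where "t = z / w"
  have "u = 0" and cases: "chebH k z w = 0 \<and> x * y = 0
     \<or> chebH (Suc i) z w = 1 * (w * chebH i z w) \<and> x = y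
     \<or> chebH (Suc i) z w = - 1 * (w * chebH i z w) \<and> x = - y"
    using sing is_singular_iff[OF xyu zw] \<open>w \<noteq> 0\<close> by auto
  then have x_or_y: "x \<noteq> 0 \<or> y \<noteq> 0"
    using xyu by auto
  have X: "proj_pt (x, y, u) (z, w) = proj_pt (x, y, 0) (t, 1)"
    using proj_pt_scale[of 1 w x y 0 t 1] \<open>w \<noteq> 0\<close> \<open>u = 0\<close> unfolding t_def by simp
  from cases consider
      "chebH k t 1 = 0" "x = 0" | "chebH k t 1 = 0" "y = 0"
    | "chebH (Suc i) t 1 = chebH i t 1" "x = y" | "chebH (Suc i) t 1 = - chebH i t 1" "x = - y"
    unfolding t_def chebH_eq_0_dehomogenise[OF \<open>w \<noteq> 0\<close>] chebH_consecutive_dehomogenise[OF \<open>w \<noteq> 0\<close>]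
    by auto
  then show ?thesis
  proof cases
    case 1
    with x_or_y have "proj_pt (x, y, 0) (t, 1) = proj_pt (0, 1, 0) (t, 1)"
      using proj_pt_scale[of y 1 0 1 0 t 1] by simp
    with 1 X show ?thesis
      unfolding explicit_singular_points_def roots_K by blast
  next
    case 2
    with x_or_y have "proj_pt (x, y, 0) (t, 1) = proj_pt (1, 0, 0) (t, 1)"
      using proj_pt_scale[of x 1 1 0 0 t 1] by simp
    with 2 X show ?thesis
      unfolding explicit_singular_points_def roots_K by blast
  next
    case 3
    with x_or_y have "proj_pt (x, y, 0) (t, 1) = proj_pt (1, 1, 0) (t, 1)"
      using proj_pt_scale[of x 1 1 1 0 t 1] by simp
    with 3 X show ?thesis
      unfolding explicit_singular_points_def roots_minus by blast
  next
    case 4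
    with x_or_y have "proj_pt (x, y, 0) (t, 1) = proj_pt (1, -1, 0) (t, 1)"
      using proj_pt_scale[of x 1 1 "-1" 0 t 1] by simp
    with 4 X show ?thesis
      unfolding explicit_singular_points_def roots_plus by blast
  qed
qed

lemma explicit_subset_singular_points: "explicit_singular_points m \<subseteq> singular_points m"
proof
  fix X
  assume "X \<in> explicit_singular_points m"
  then consider "X = proj_pt (1, 0, 0) (1, 0)" | "X = proj_pt (0, 1, 0) (1, 0)"
    | t where "X = proj_pt (1, 0, 0) (t, 1)" "chebH k t 1 = 0"
    | t where "X = proj_pt (0, 1, 0) (t, 1)" "chebH k t 1 = 0"
    | t where "X = proj_pt (1, 1, 0) (t, 1)" "chebH (Suc i) t 1 = chebH i t 1"
    | t where "X = proj_pt (1, -1, 0) (t, 1)" "chebH (Suc i) t 1 = - chebH i t 1"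
    unfolding explicit_singular_points_def roots_K roots_minus roots_plus by blast
  then show "X \<in> singular_points m"
  proof cases
    case 1
    then show ?thesis
      using proj_pt_in_singular_points[of 1 0 0 1 0 m] is_singular_iff[of 1 0 0 1 0] by simp
  next
    case 2
    then show ?thesis
      using proj_pt_in_singular_points[of 0 1 0 1 0 m] is_singular_iff[of 0 1 0 1 0] by simp
  next
    case (3 t)
    then show ?thesis
      using proj_pt_in_singular_points[of 1 0 0 t 1 m] is_singular_iff[of 1 0 0 t 1] by simp
  next
    case (4 t)
    then show ?thesis
      using proj_pt_in_singular_points[of 0 1 0 t 1 m] is_singular_iff[of 0 1 0 t 1] by simp
  next
    case (5 t)
    then show ?thesis
      using proj_pt_in_singular_points[of 1 1 0 t 1 m] is_singular_iff[of 1 1 0 t 1] by simp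
  next
    case (6 t)
    then show ?thesis
      using proj_pt_in_singular_points[of 1 "-1" 0 t 1 m] is_singular_iff[of 1 "-1" 0 t 1] by simp
  qed
qed

lemma singular_points_eq: "singular_points m = explicit_singular_points m"
proof
  show "singular_points m \<subseteq> explicit_singular_points m"
  proof
    fix X
    assume "X \<in> singular_points m"
    then obtain x y u z w where X: "X = proj_pt (x, y, u) (z, w)"
      and xyu: "(x, y, u) \<noteq> (0, 0, 0)" and zw: "(z, w) \<noteq> (0, 0)" and sing: "is_singular m x y u z w"
      unfolding singular_points_def by blast
    show "X \<in> explicit_singular_points m"
      unfolding X using singular_point_at_infinity[OF xyu zw sing] singular_point_affine[OF xyu zw sing]
      by blast
  qed
qed (rule explicit_subset_singular_points)

lemma card_singular_points: "card (singular_points m) = 2 + 2 * k + 2 * Suc i"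
  using card_explicit_singular_points[of m] chebH_roots_count[of k]
    chebH_roots_count_minus[of i] chebH_roots_count_plus[of i]
  unfolding singular_points_eq roots_K roots_minus roots_plus by simp

end

lemma Fpoly_normal_form_pos: "Fpoly_normal_form 1 (-1) k k (3 * k + 3) (int (Suc k))"
proof (intro Fpoly_normal_form.intro Fnormal_nondegenerate_pos Fpoly_normal_form_axioms.intro)
  have "int (Suc k) - 1 = int k"
    by simp
  then show "chebS (int (Suc k) - 1) z = 0 \<longleftrightarrow> chebH k z 1 = 0"
    "chebS (int (Suc k)) z - chebS (int (Suc k) - 1) z = 0 \<longleftrightarrow> chebH (Suc k) z 1 = chebH k z 1"
    "chebS (int (Suc k)) z + chebS (int (Suc k) - 1) z = 0 \<longleftrightarrow> chebH (Suc k) z 1 = - chebH k z 1" for z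
    by (simp_all only: chebS_nonneg) (simp_all add: eq_neg_iff_add_eq_0)
qed (rule Fpoly_pos_eq_Fnormal)

lemma Fpoly_normal_form_neg: "Fpoly_normal_form (-1) 1 (Suc k) k (3 * k + 4) (- int (k + 2))"
proof (intro Fpoly_normal_form.intro Fnormal_nondegenerate_neg Fpoly_normal_form_axioms.intro)
  have "- int (k + 2) - 1 = - int (Suc k + 2)"
    by simp
  then show "chebS (- int (k + 2) - 1) z = 0 \<longleftrightarrow> chebH (Suc k) z 1 = 0"
    "chebS (- int (k + 2)) z - chebS (- int (k + 2) - 1) z = 0 \<longleftrightarrow> chebH (Suc k) z 1 = chebH k z 1"
    "chebS (- int (k + 2)) z + chebS (- int (k + 2) - 1) z = 0 \<longleftrightarrow> chebH (Suc k) z 1 = - chebH k z 1" for z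
    by (simp_all only: chebS_neg) (auto simp: algebra_simps eq_neg_iff_add_eq_0 neg_eq_iff_add_eq_0)
qed (rule Fpoly_neg_eq_Fnormal)

theorem proposition7p5:
  fixes m :: int
  assumes "m \<ge> 1 \<or> m \<le> -2"
  shows "singular_points m =
           {proj_pt (1, 0, 0) (1, 0), proj_pt (0, 1, 0) (1, 0)}
           \<union> {proj_pt (1, 0, 0) (z, 1) | z. chebS (m - 1) z = 0}
           \<union> {proj_pt (0, 1, 0) (z, 1) | z. chebS (m - 1) z = 0}
           \<union> {proj_pt (1, 1, 0) (z, 1) | z. chebS m z - chebS (m - 1) z = 0}
           \<union> {proj_pt (1, -1, 0) (z, 1) | z. chebS m z + chebS (m - 1) z = 0} \<and>
         card (singular_points m) = (if m \<ge> 1 then nat (4 * m) else nat (-(2 + 4 * m)))"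
proof -
  have "singular_points m = explicit_singular_points m \<and>
      card (singular_points m) = (if m \<ge> 1 then nat (4 * m) else nat (-(2 + 4 * m)))"
  proof (cases "m \<ge> 1")
    case True
    define k where "k = nat (m - 1)"
    then have m: "m = int (Suc k)"
      using True by simp
    interpret Fpoly_normal_form 1 "-1" k k "3 * k + 3" m
      unfolding m by (rule Fpoly_normal_form_pos)
    show ?thesis
      using singular_points_eq card_singular_points True m by simp
  next
    case False
    define k where "k = nat (- m - 2)"
    then have m: "m = - int (k + 2)"
      using False assms by simp
    interpret Fpoly_normal_form "-1" 1 "Suc k" k "3 * k + 4" m
      unfolding m by (rule Fpoly_normal_form_neg)
    show ?thesis
      using singular_points_eq card_singular_points False m by simp
  qed
  then show ?thesis
    unfolding explicit_singular_points_def .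
qed

end
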